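(* Let $\mathcal{M}$ be a finite set of at least two pairwise distinct finite state machines with outputs, all over the same input alphabet $\Sigma$ and output alphabet $\Gamma$, and let $M_{\mathrm{trg}} \in \mathcal{M}$ be a target machine. Let $V$ be a verifier for the Remote Software Identification problem (defined in the context) which is RSI-correct and RSI-$\varepsilon_0$-sound. Then there exists a verifier $V'$ which is likewise RSI-correct and RSI-$\varepsilon_0$-sound and which behaves exactly like $V$ except that it never submits to the challenge machine any non-distinguishing sequence that $V$ would submit; i.e., every input sequence that $V'$ sends to the challenge machine lies in $\mathsf{DS}(\mathcal{M})$.
   Context: A finite state machine with outputs (FSM) is a tuple $M=(\mathcal{Z}, z_0, \Sigma, \Gamma, \delta, \omega)$ with state set $\mathcal{Z}$, start state $z_0\in\mathcal{Z}$, finite input alphabet $\Sigma$, finite output alphabet $\Gamma$, transition function $\delta:\mathcal{Z}\times\Sigma\to\mathcal{Z}$ and output function $\omega:\mathcal{Z}\times\Sigma\to\Gamma$. For a state $z$ and a sequence $\vec\sigma=(\sigma_1,\dots,\sigma_n)\in\Sigma^n$, $\omega(z,\vec\sigma)=(\gamma_1,\dots,\gamma_n)$ where $z_1=z$, $z_{i+1}=\delta(z_i,\sigma_i)$ and $\gamma_j=\omega(z_j,\sigma_j)$; write $\omega_M(\vec\sigma):=\omega_M(z_0,\vec\sigma)$ for the output function of $M$ started in its start state. A sequence $\vec\sigma\in\Sigma^*$ is a distinguishing sequence with respect to $\mathcal{M}$ if there exist $M,M'\in\mathcal{M}$ with $\omega_M(\vec\sigma)\neq\omega_{M'}(\vec\sigma)$;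 $\mathsf{DS}(\mathcal{M})\subseteq\Sigma^*$ denotes the set of all distinguishing sequences, and a sequence not in $\mathsf{DS}(\mathcal{M})$ is called non-distinguishing. Remote Software Identification (RSI) setting: a prover selects a source machine $M_{\mathrm{src}}\in\mathcal{M}$ and gives the verifier remote access to a challenge machine $M_{\mathrm{chl}}$, here with $M_{\mathrm{chl}}=M_{\mathrm{src}}$. The verifier knows the full specifications of all machines in $\mathcal{M}$ (and $M_{\mathrm{trg}}$), but can interact with $M_{\mathrm{chl}}$ only by sending input sequences $\vec\sigma\in\Sigma^*$ and receiving the corresponding outputs, and may reset $M_{\mathrm{chl}}$ to its start state. At the end the verifier outputs a decision $d\in\{\texttt{true},\texttt{false}\}$. The verifier is RSI-correct if $\Pr[d=\texttt{true}\mid M_{\mathrm{src}}=M_{\mathrm{trg}}]=1$, and RSI-$\varepsilon_0$-sound if $\Pr[d=\texttt{true}\mid M_{\mathrm{src}}\neq M_{\mathrm{trg}}]\le\varepsilon_0$. *)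

theory Defs
  imports "HOL-Probability.Probability"
begin

record ('z, 'i, 'o) fsm =
  start :: 'z
  trans :: "'z \<Rightarrow> 'i \<Rightarrow> 'z"
  out   :: "'z \<Rightarrow> 'i \<Rightarrow> 'o"

fun outs :: "('z, 'i, 'o) fsm \<Rightarrow> 'z \<Rightarrow> 'i list \<Rightarrow> 'o list" where
  "outs M z [] = []"
| "outs M z (a # as) = out M z a # outs M (trans M z a) as"

definition omegaM :: "('z, 'i, 'o) fsm \<Rightarrow> 'i list \<Rightarrow> 'o list" where
  "omegaM M \<sigma> = outs M (start M) \<sigma>"

definition DS :: "('z, 'i, 'o) fsm set \<Rightarrow> 'i list set" where
  "DS Ms = {\<sigma>. \<exists>M\<in>Ms. \<exists>M'\<in>Ms. omegaM M \<sigma> \<noteq> omegaM M' \<sigma>}"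

text \<open>A deterministic, always-halting, adaptive verifier strategy: either it outputs a decision,
  or it submits an input sequence (applied from the start state, i.e. after a reset) to the
  challenge machine and continues depending on the received output.\<close>
datatype ('i, 'o) strat = Decide bool | Query "'i list" "'o list \<Rightarrow> ('i, 'o) strat"

text \<open>A (randomized) verifier: a probability distribution over deterministic strategies
  (its random coins are drawn up front).\<close>
type_synonym ('i, 'o) verifier = "('i, 'o) strat pmf"

primrec run :: "('i, 'o) strat \<Rightarrow> ('z, 'i, 'o) fsm \<Rightarrow> bool" where
  "run (Decide d) M = d"
| "run (Query \<sigma> k) M = run (k (omegaM M \<sigma>)) M"

primrec queries :: "('i, 'o) strat \<Rightarrow> ('z, 'i, 'o) fsm \<Rightarrow> 'i list set" where
  "queries (Decide d) M = {}"
| "queries (Query \<sigma> k) M = insert \<sigma> (queries (k (omegaM M \<sigma>)) M)"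

text \<open>Distribution of the decision d when the challenge machine is M (M_chl = M_src = M).\<close>
definition decision :: "('i, 'o) verifier \<Rightarrow> ('z, 'i, 'o) fsm \<Rightarrow> bool pmf" where
  "decision V M = map_pmf (\<lambda>s. run s M) V"

definition RSI_correct :: "('z, 'i, 'o) fsm \<Rightarrow> ('i, 'o) verifier \<Rightarrow> bool" where
  "RSI_correct Mtrg V \<longleftrightarrow> pmf (decision V Mtrg) True = 1"

definition RSI_sound ::
  "('z, 'i, 'o) fsm set \<Rightarrow> ('z, 'i, 'o) fsm \<Rightarrow> real \<Rightarrow> ('i, 'o) verifier \<Rightarrow> bool" where
  "RSI_sound Ms Mtrg \<epsilon>0 V \<longleftrightarrow> (\<forall>M\<in>Ms. M \<noteq> Mtrg \<longrightarrow> pmf (decision V M) True \<le> \<epsilon>0)"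

end

theory Submission
  imports Defs
begin

text \<open>A non-distinguishing sequence produces the same output on every machine of the family,
  so the verifier learns nothing by submitting it: its answer can be simulated on any fixed
  reference machine of the family instead. Removing such queries from every strategy of V
  changes neither the decision nor the distinguishing queries made on any machine of the
  family, which gives V'.\<close>

lemma omegaM_eq_if_not_DS:
  assumes "\<sigma> \<notin> DS Ms" and "M \<in> Ms" and "M' \<in> Ms"
  shows "omegaM M \<sigma> = omegaM M' \<sigma>"
  using assms unfolding DS_def by blast

primrec skip_nondistinguishing ::
  "('z, 'i, 'o) fsm set \<Rightarrow> ('z, 'i, 'o) fsm \<Rightarrow> ('i, 'o) strat \<Rightarrow> ('i, 'o) strat" where
  "skip_nondistinguishing Ms Mref (Decide d) = Decide d"
| "skip_nondistinguishing Ms Mref (Query \<sigma> k) =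
     (if \<sigma> \<in> DS Ms then Query \<sigma> (\<lambda>\<gamma>. skip_nondistinguishing Ms Mref (k \<gamma>))
      else skip_nondistinguishing Ms Mref (k (omegaM Mref \<sigma>)))"

lemma run_skip_nondistinguishing:
  assumes "M \<in> Ms" and "Mref \<in> Ms"
  shows "run (skip_nondistinguishing Ms Mref s) M = run s M"
proof (induction s)
  case (Query \<sigma> k)
  then show ?case
    using omegaM_eq_if_not_DS[OF _ assms(2,1)] by (cases "\<sigma> \<in> DS Ms") simp_all
qed simp

lemma queries_skip_nondistinguishing:
  assumes "M \<in> Ms" and "Mref \<in> Ms"
  shows "queries (skip_nondistinguishing Ms Mref s) M = queries s M \<inter> DS Ms"
proof (induction s)
  case (Query \<sigma> k)
  then show ?case
    using omegaM_eq_if_not_DS[OF _ assms(2,1)] by (cases "\<sigma> \<in> DS Ms") auto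
qed simp

lemma decision_map_skip_nondistinguishing:
  assumes "M \<in> Ms" and "Mref \<in> Ms"
  shows "decision (map_pmf (skip_nondistinguishing Ms Mref) V) M = decision V M"
  unfolding decision_def pmf.map_comp o_def
  by (simp add: run_skip_nondistinguishing[OF assms])

theorem theorem1:
  fixes Ms :: "('z::finite, 'i::finite, 'o::finite) fsm set"
    and Mtrg :: "('z, 'i, 'o) fsm"
    and V :: "('i, 'o) verifier"
    and \<epsilon>0 :: real
  assumes "finite Ms" and "card Ms \<ge> 2" and "Mtrg \<in> Ms"
    and "RSI_correct Mtrg V" and "RSI_sound Ms Mtrg \<epsilon>0 V"
  shows "\<exists>V' :: ('i, 'o) verifier.
           RSI_correct Mtrg V' \<and> RSI_sound Ms Mtrg \<epsilon>0 V' \<and>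
           (\<forall>M\<in>Ms. map_pmf (\<lambda>s. (run s M, queries s M)) V'
                    = map_pmf (\<lambda>s. (run s M, queries s M \<inter> DS Ms)) V) \<and>
           (\<forall>M\<in>Ms. \<forall>s\<in>set_pmf V'. queries s M \<subseteq> DS Ms)"
proof (intro exI conjI)
  let ?V' = "map_pmf (skip_nondistinguishing Ms Mtrg) V"
  note decision_eq = decision_map_skip_nondistinguishing[OF _ \<open>Mtrg \<in> Ms\<close>]
  note run_eq = run_skip_nondistinguishing[OF _ \<open>Mtrg \<in> Ms\<close>]
  note queries_eq = queries_skip_nondistinguishing[OF _ \<open>Mtrg \<in> Ms\<close>]
  show "RSI_correct Mtrg ?V'"
    using \<open>RSI_correct Mtrg V\<close> decision_eq[OF \<open>Mtrg \<in> Ms\<close>] unfolding RSI_correct_def by simp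
  show "RSI_sound Ms Mtrg \<epsilon>0 ?V'"
    using \<open>RSI_sound Ms Mtrg \<epsilon>0 V\<close> decision_eq unfolding RSI_sound_def by simp
  show "\<forall>M\<in>Ms. map_pmf (\<lambda>s. (run s M, queries s M)) ?V'
                 = map_pmf (\<lambda>s. (run s M, queries s M \<inter> DS Ms)) V"
    unfolding pmf.map_comp o_def by (simp add: run_eq queries_eq)
  show "\<forall>M\<in>Ms. \<forall>s\<in>set_pmf ?V'. queries s M \<subseteq> DS Ms"
    by (auto simp: queries_eq)
qed

end
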